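(* In the setting of the context, let $x\in(-3N,3N)$ be such that $f_N(x)\ge1$ and let $\varepsilon\in(0,1)$. Let $w\in W^{1,2}([-1,1])$ with $w(\pm1)=\pm f_N(x)$ and assume $H_x(w)\le H_x(v_N(x,\cdot))+\varepsilon$. Then there exists $C>0$ (uniform over the choice of $x$ and $\varepsilon$) such that $$\|w-v_N(x,\cdot)\|_{L^\infty([-1,1])}\le C\varepsilon^{1/2}.$$
   Context: Fix a small universal constant $\alpha\in(0,1)$ (e.g. $\alpha=1/10$). For $N>0$ define $f_N:[-3N,3N]\to\mathbb{R}$ by $f_N(x)=1-\alpha$ if $|x|\le N$, $f_N(x)=\frac{|x|(1+\alpha)}{N}-2\alpha$ if $N\le|x|\le2N$, $f_N(x)=2$ if $2N\le|x|\le3N$. For $x\in[-3N,3N]$ and $w\in W^{1,2}([-1,1])$, $H_x(w)=\int_{-1}^1(w'(y))^2dy+|\{w\ne0\}\cap[-1,1]|$, and $v_N(x,\cdot)$ is the unique minimizer of $H_x$ among $w\in W^{1,2}([-1,1])$ with $w(\pm1)=\pm f_N(x)$. *)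

theory Defs
  imports "HOL-Analysis.Analysis"
begin

definition fN :: "real \<Rightarrow> real \<Rightarrow> real \<Rightarrow> real" where
  "fN \<alpha> N x =
     (if \<bar>x\<bar> \<le> N then 1 - \<alpha>
      else if \<bar>x\<bar> \<le> 2 * N then \<bar>x\<bar> * (1 + \<alpha>) / N - 2 * \<alpha>
      else 2)"

text \<open>g is a weak derivative of w on [-1,1], with g in L^2([-1,1]);
  w is taken to be its (absolutely) continuous representative.\<close>
definition has_weak_deriv :: "(real \<Rightarrow> real) \<Rightarrow> (real \<Rightarrow> real) \<Rightarrow> bool" where
  "has_weak_deriv w g \<longleftrightarrow>
     set_integrable lborel {-1..1} g \<and>
     set_integrable lborel {-1..1} (\<lambda>t. (g t)\<^sup>2) \<and>
     (\<forall>t\<in>{-1..1}. w t = w (-1) + (LINT s:{-1..t}|lborel. g s))"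

definition W12 :: "(real \<Rightarrow> real) \<Rightarrow> bool" where
  "W12 w \<longleftrightarrow> (\<exists>g. has_weak_deriv w g)"

definition wderiv :: "(real \<Rightarrow> real) \<Rightarrow> real \<Rightarrow> real" where
  "wderiv w = (SOME g. has_weak_deriv w g)"

definition Hfun :: "(real \<Rightarrow> real) \<Rightarrow> real" where
  "Hfun w = (LINT s:{-1..1}|lborel. (wderiv w s)\<^sup>2)
            + measure lborel {y\<in>{-1..1}. w y \<noteq> 0}"

definition admissible :: "real \<Rightarrow> (real \<Rightarrow> real) \<Rightarrow> bool" where
  "admissible a w \<longleftrightarrow> W12 w \<and> w (-1) = - a \<and> w 1 = a"

definition is_minimizer :: "real \<Rightarrow> (real \<Rightarrow> real) \<Rightarrow> bool" where
  "is_minimizer a v \<longleftrightarrow> admissible a v \<and> (\<forall>w. admissible a w \<longrightarrow> Hfun v \<le> Hfun w)"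

end

theory Submission
  imports Defs
begin

(*
  Write a = f_N(x), so 1 <= a <= 2. The linear profile a y is admissible with H = 2 a^2 + 2, so it
  suffices to show that every admissible w with H(w) <= 2 a^2 + 2 + delta satisfies
  |w(y) - a y| <= 3 sqrt(2 delta); applied to v (delta = 0) and to w (delta = eps) this gives
  C = 3 sqrt 2.
  Let p and q be the first and last zeros of w, and L1 = p + 1, L2 = 1 - q. Then
  |{w ~= 0}| >= L1 + L2, and by Cauchy-Schwarz the Dirichlet energy on [-1, p] and [q, 1] is at
  least a^2/L1 and a^2/L2. Because a >= 1, the budget delta then bounds (Li - 1)^2, the energy on
  [p, q] and the energy excess over the chords of w on the outer segments. Cauchy-Schwarz once
  more bounds the distance of w from its chords, and the chords are within 2 |Li - 1| of a y.
*)

lemma integral_square_diff_const: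
  fixes f :: "real \<Rightarrow> real"
  assumes f: "f integrable_on {c..d}" and f2: "(\<lambda>x. (f x)\<^sup>2) integrable_on {c..d}" and "c \<le> d"
  shows "(\<lambda>x. (f x - m)\<^sup>2) integrable_on {c..d}"
    and "integral {c..d} (\<lambda>x. (f x - m)\<^sup>2)
           = integral {c..d} (\<lambda>x. (f x)\<^sup>2) - 2 * m * integral {c..d} f + m\<^sup>2 * (d - c)"
proof -
  have expand: "(\<lambda>x. (f x - m)\<^sup>2) = (\<lambda>x. ((f x)\<^sup>2 - 2 * m * f x) + m\<^sup>2)"
    by (simp add: fun_eq_iff power2_diff)
  have lin: "(\<lambda>x. 2 * m * f x) integrable_on {c..d}"
    using integrable_on_cmult_left[OF f, of "2 * m"] by simp
  have quad: "(\<lambda>x. (f x)\<^sup>2 - 2 * m * f x) integrable_on {c..d}"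
    by (intro integrable_diff f2 lin)
  show "(\<lambda>x. (f x - m)\<^sup>2) integrable_on {c..d}"
    unfolding expand by (intro integrable_add quad integrable_const_ivl)
  show "integral {c..d} (\<lambda>x. (f x - m)\<^sup>2)
          = integral {c..d} (\<lambda>x. (f x)\<^sup>2) - 2 * m * integral {c..d} f + m\<^sup>2 * (d - c)"
    unfolding expand using \<open>c \<le> d\<close>
    by (simp add: integral_add[OF quad integrable_const_ivl] integral_diff[OF f2 lin])
qed

lemma integral_square_diff_mean:
  fixes f :: "real \<Rightarrow> real"
  assumes f: "f integrable_on {c..d}" and f2: "(\<lambda>x. (f x)\<^sup>2) integrable_on {c..d}" and "c < d"
  shows "(d - c) * integral {c..d} (\<lambda>x. (f x - integral {c..d} f / (d - c))\<^sup>2)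
           = (d - c) * integral {c..d} (\<lambda>x. (f x)\<^sup>2) - (integral {c..d} f)\<^sup>2"
proof -
  have "L * (Q - 2 * (I / L) * I + (I / L)\<^sup>2 * L) = L * Q - I\<^sup>2" if "0 < L" for L I Q :: real
    using that by (simp add: field_simps power2_eq_square)
  then show ?thesis
    using integral_square_diff_const(2)[OF f f2] \<open>c < d\<close> by simp
qed

lemma Cauchy_Schwarz_integral_interval:
  fixes f :: "real \<Rightarrow> real"
  assumes f: "f integrable_on {c..d}" and f2: "(\<lambda>x. (f x)\<^sup>2) integrable_on {c..d}" and "c \<le> d"
  shows "(integral {c..d} f)\<^sup>2 \<le> (d - c) * integral {c..d} (\<lambda>x. (f x)\<^sup>2)"
proof (cases "c = d")
  case False
  with \<open>c \<le> d\<close> have "c < d" by simp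
  have "0 \<le> integral {c..d} (\<lambda>x. (f x - integral {c..d} f / (d - c))\<^sup>2)"
    by (rule integral_nonneg[OF integral_square_diff_const(1)[OF f f2 \<open>c \<le> d\<close>]]) simp
  then have "0 \<le> (d - c) * integral {c..d} (\<lambda>x. (f x - integral {c..d} f / (d - c))\<^sup>2)"
    using \<open>c < d\<close> by simp
  also have "\<dots> = (d - c) * integral {c..d} (\<lambda>x. (f x)\<^sup>2) - (integral {c..d} f)\<^sup>2"
    by (rule integral_square_diff_mean[OF f f2 \<open>c < d\<close>])
  finally show ?thesis
    by simp
qed simp

lemma integral_chord_deviation:
  fixes g :: "real \<Rightarrow> real"
  assumes g: "g integrable_on {c..d}" and g2: "(\<lambda>s. (g s)\<^sup>2) integrable_on {c..d}"
    and t: "t \<in> {c..d}"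
  shows "(integral {c..t} g - integral {c..d} g * (t - c) / (d - c))\<^sup>2
           \<le> (d - c) * integral {c..d} (\<lambda>s. (g s)\<^sup>2) - (integral {c..d} g)\<^sup>2"
proof (cases "c = d")
  case False
  with t have "c < d" and ct: "c \<le> t" "t \<le> d" by auto
  define m where "m = integral {c..d} g / (d - c)"
  have sub: "{c..t} \<subseteq> {c..d}" using ct by auto
  have gt: "g integrable_on {c..t}" and g2t: "(\<lambda>s. (g s)\<^sup>2) integrable_on {c..t}"
    using integrable_on_subinterval[OF g sub] integrable_on_subinterval[OF g2 sub] by auto
  have dev: "(\<lambda>s. (g s - m)\<^sup>2) integrable_on {c..d}"
    using \<open>c < d\<close> by (intro integral_square_diff_const(1)[OF g g2]) simp
  have devt: "(\<lambda>s. (g s - m)\<^sup>2) integrable_on {c..t}"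
    using ct by (intro integral_square_diff_const(1)[OF gt g2t])
  have "integral {c..t} (\<lambda>s. g s - m) = integral {c..t} g - m * (t - c)"
    using ct by (simp add: integral_diff[OF gt integrable_const_ivl])
  then have "(integral {c..t} g - integral {c..d} g * (t - c) / (d - c))\<^sup>2
               = (integral {c..t} (\<lambda>s. g s - m))\<^sup>2"
    by (simp add: m_def)
  also have "\<dots> \<le> (t - c) * integral {c..t} (\<lambda>s. (g s - m)\<^sup>2)"
    by (rule Cauchy_Schwarz_integral_interval)
       (use ct gt devt in \<open>auto intro: integrable_diff\<close>)
  also have "\<dots> \<le> (d - c) * integral {c..d} (\<lambda>s. (g s - m)\<^sup>2)"
    using ct dev devt
    by (intro mult_mono integral_subset_le[OF sub] integral_nonneg) auto
  also have "\<dots> = (d - c) * integral {c..d} (\<lambda>s. (g s)\<^sup>2) - (integral {c..d} g)\<^sup>2"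
    unfolding m_def by (rule integral_square_diff_mean[OF g g2 \<open>c < d\<close>])
  finally show ?thesis .
qed (use t in simp)

lemma integral_combine3:
  fixes f :: "real \<Rightarrow> real"
  assumes "a \<le> b" "b \<le> c" "c \<le> d" and f: "f integrable_on {a..d}"
  shows "integral {a..d} f = integral {a..b} f + integral {b..c} f + integral {c..d} f"
proof -
  have "integral {b..c} f + integral {c..d} f = integral {b..d} f"
    using assms integrable_on_subinterval[OF f, of b d]
    by (intro Henstock_Kurzweil_Integration.integral_combine) auto
  moreover have "integral {a..b} f + integral {b..d} f = integral {a..d} f"
    using assms by (intro Henstock_Kurzweil_Integration.integral_combine) auto
  ultimately show ?thesis
    by simp
qed

lemma negligible_nonzero_if_indefinite_integral_zero:
  fixes k :: "real \<Rightarrow> real"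
  assumes k: "k integrable_on {c..d}" and zero: "\<And>t. t \<in> {c..d} \<Longrightarrow> integral {c..t} k = 0"
  shows "negligible {x \<in> {c..d}. k x \<noteq> 0}"
proof -
  define k' where "k' x = (if x \<in> {c..d} then k x else 0)" for x
  have "k' integrable_on UNIV"
    unfolding k'_def Henstock_Kurzweil_Integration.integrable_restrict_UNIV by (rule k)
  then have "k' integrable_on cbox a b" for a b
    by (rule integrable_on_subcbox) simp
  \<comment> \<open>Lebesgue differentiation: off a null set N, k' is the limit of its averages over [x, x + h].\<close>
  then obtain N where "negligible N" and N: "\<And>x e. x \<notin> N \<Longrightarrow> 0 < e \<Longrightarrow>
      \<exists>\<delta>>0. \<forall>h. 0 < h \<and> h < \<delta> \<longrightarrow>
        norm (integral (cbox x (x + h *\<^sub>R One)) k' /\<^sub>R h ^ DIM(real) - k' x) < e"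
    using integrable_ccontinuous_explicit by blast
  have "k x = 0" if x: "x \<in> {c<..<d}" "x \<notin> N" for x
  proof (rule ccontr)
    assume "k x \<noteq> 0"
    then obtain \<delta> where "0 < \<delta>"
      and \<delta>: "\<And>h. 0 < h \<Longrightarrow> h < \<delta> \<Longrightarrow> \<bar>integral {x..x + h} k' / h - k x\<bar> < \<bar>k x\<bar>"
      using N[OF x(2), of "\<bar>k x\<bar>"] x(1) by (auto simp: k'_def cbox_interval divide_inverse_commute)
    define h where "h = min (\<delta> / 2) (d - x)"
    have h: "0 < h" "h < \<delta>" "x + h \<le> d"
      using \<open>0 < \<delta>\<close> x(1) by (auto simp: h_def min_def)
    have "integral {x..x + h} k' = integral {x..x + h} k"
      using x(1) h by (intro integral_cong) (auto simp: k'_def)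
    also have "\<dots> = integral {c..x + h} k - integral {c..x} k"
      using Henstock_Kurzweil_Integration.integral_combine[where f = k and a = c and c = x and b = "x + h"]
        integrable_on_subinterval[OF k, of c "x + h"] x(1) h
      by auto
    also have "\<dots> = 0"
      using zero x(1) h by auto
    finally show False
      using \<delta>[OF h(1,2)] by simp
  qed
  then have "{x \<in> {c..d}. k x \<noteq> 0} \<subseteq> N \<union> {c, d}"
    by (force simp: less_le)
  moreover have "negligible (N \<union> {c, d})"
    using \<open>negligible N\<close> by simp
  ultimately show ?thesis
    using negligible_subset by blast
qed

lemma has_weak_deriv_integrable:
  assumes "has_weak_deriv w g"
  shows "g integrable_on {-1..1}" and "(\<lambda>s. (g s)\<^sup>2) integrable_on {-1..1}"
    and "(LINT s:{-1..1}|lborel. (g s)\<^sup>2) = integral {-1..1} (\<lambda>s. (g s)\<^sup>2)"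
proof -
  have "set_integrable lborel {-1..1} g" and "set_integrable lborel {-1..1} (\<lambda>s. (g s)\<^sup>2)"
    using assms unfolding has_weak_deriv_def by auto
  then show "g integrable_on {-1..1}" and "(\<lambda>s. (g s)\<^sup>2) integrable_on {-1..1}"
    and "(LINT s:{-1..1}|lborel. (g s)\<^sup>2) = integral {-1..1} (\<lambda>s. (g s)\<^sup>2)"
    by (simp_all add: set_borel_integral_eq_integral)
qed

lemma has_weak_deriv_increment:
  assumes w: "has_weak_deriv w g" and "-1 \<le> s" "s \<le> t" "t \<le> 1"
  shows "w t = w s + integral {s..t} g"
proof -
  have gi: "set_integrable lborel {-1..1} g"
    and rep: "\<And>u. u \<in> {-1..1} \<Longrightarrow> w u = w (-1) + (LINT s:{-1..u}|lborel. g s)"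
    using w unfolding has_weak_deriv_def by blast+
  have from_left: "w u = w (-1) + integral {-1..u} g" if "u \<in> {-1..1}" for u
  proof -
    have "set_integrable lborel {-1..u} g"
      using that by (intro set_integrable_subset[OF gi]) auto
    then show ?thesis
      using rep[OF that] by (simp add: set_borel_integral_eq_integral(2))
  qed
  have "integral {-1..s} g + integral {s..t} g = integral {-1..t} g"
    using assms integrable_on_subinterval[OF has_weak_deriv_integrable(1)[OF w], of "-1" t]
    by (intro Henstock_Kurzweil_Integration.integral_combine) auto
  then show ?thesis
    using from_left[of s] from_left[of t] assms by simp
qed

lemma has_weak_deriv_continuous_on:
  assumes w: "has_weak_deriv w g"
  shows "continuous_on {-1..1} w"
proof (rule continuous_on_eq)
  show "continuous_on {-1..1} (\<lambda>t. w (-1) + integral {-1..t} g)"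
    by (intro continuous_on_add continuous_on_const
        indefinite_integral_continuous_1 has_weak_deriv_integrable(1)[OF w])
next
  show "w (-1) + integral {-1..t} g = w t" if "t \<in> {-1..1}" for t
    using has_weak_deriv_increment[OF w, of "-1" t] that by simp
qed

lemma has_weak_deriv_unique:
  assumes g: "has_weak_deriv w g" and h: "has_weak_deriv w h"
  shows "negligible {x \<in> {-1..1}. g x \<noteq> h x}"
proof -
  have gI: "g integrable_on {-1..t}" if "t \<le> 1" for t
    using that by (intro integrable_on_subinterval[OF has_weak_deriv_integrable(1)[OF g]]) auto
  have hI: "h integrable_on {-1..t}" if "t \<le> 1" for t
    using that by (intro integrable_on_subinterval[OF has_weak_deriv_integrable(1)[OF h]]) auto
  have "negligible {x \<in> {-1..1}. g x - h x \<noteq> 0}"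
  proof (rule negligible_nonzero_if_indefinite_integral_zero)
    show "(\<lambda>x. g x - h x) integrable_on {-1..1}"
      by (intro integrable_diff gI hI) auto
    show "integral {-1..t} (\<lambda>x. g x - h x) = 0" if "t \<in> {-1..1}" for t
      using that has_weak_deriv_increment[OF g, of "-1" t] has_weak_deriv_increment[OF h, of "-1" t]
      by (simp add: integral_diff gI hI)
  qed
  then show ?thesis
    by simp
qed

lemma has_weak_deriv_linear: "has_weak_deriv (\<lambda>y. a * y) (\<lambda>_. a)"
proof -
  have "set_integrable lborel {-1..1::real} (\<lambda>_. c)" for c :: real
    unfolding set_integrable_def using integrable_real_indicator[of "{-1..1::real}" lborel]
    by (simp add: mult.commute)
  moreover have "a * t = a * (-1) + (LINT s:{-1..t}|lborel. a)" if "t \<in> {-1..1}" for t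
    using that by (simp add: set_lebesgue_integral_def algebra_simps)
  ultimately show ?thesis
    unfolding has_weak_deriv_def by auto
qed

lemma W12_has_weak_deriv_wderiv:
  assumes "W12 w"
  shows "has_weak_deriv w (wderiv w)"
  using assms unfolding W12_def wderiv_def by (rule someI_ex)

lemma Hfun_linear:
  assumes "a \<noteq> 0"
  shows "Hfun (\<lambda>y. a * y) = 2 * a\<^sup>2 + 2"
proof -
  have "W12 (\<lambda>y. a * y)"
    unfolding W12_def using has_weak_deriv_linear by blast
  note g = W12_has_weak_deriv_wderiv[OF this]
  \<comment> \<open>wderiv picks some weak derivative; it is the constant a only off a null set.\<close>
  have "(LINT s:{-1..1}|lborel. (wderiv (\<lambda>y. a * y) s)\<^sup>2) = integral {-1..1::real} (\<lambda>_. a\<^sup>2)"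
    unfolding has_weak_deriv_integrable(3)[OF g]
  proof (rule Henstock_Kurzweil_Integration.integral_spike)
    show "negligible {x \<in> {-1..1}. wderiv (\<lambda>y. a * y) x \<noteq> a}"
      using has_weak_deriv_unique[OF g has_weak_deriv_linear] .
  qed auto
  moreover have "{y \<in> {-1..1}. a * y \<noteq> 0} = {-1..1::real} - {0}"
    using assms by auto
  then have "measure lborel {y \<in> {-1..1}. a * y \<noteq> 0}
      = measure lborel {-1..1::real} - measure lborel {0::real}"
    by (simp only:) (rule measure_Diff, auto)
  then have "measure lborel {y \<in> {-1..1}. a * y \<noteq> 0} = 2"
    by simp
  ultimately show ?thesis
    unfolding Hfun_def by simp
qed

lemma first_and_last_zero:
  fixes w :: "real \<Rightarrow> real"
  assumes cont: "continuous_on {c..d} w" and "c \<le> d" and neg: "w c < 0" and pos: "0 < w d"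
  obtains p q where "c < p" "p \<le> q" "q < d" "w p = 0" "w q = 0"
    and "\<And>t. t \<in> {c..d} \<Longrightarrow> w t = 0 \<Longrightarrow> p \<le> t \<and> t \<le> q"
proof -
  define Z where "Z = {t \<in> {c..d}. w t = 0}"
  have "closed Z"
    unfolding Z_def by (rule continuous_closed_preimage_constant[OF cont]) auto
  moreover have "bounded Z"
    by (rule bounded_subset[of "{c..d}"]) (auto simp: Z_def)
  ultimately have "compact Z"
    by (simp add: compact_eq_bounded_closed)
  moreover have "Z \<noteq> {}"
    using IVT'[of w c 0 d] cont \<open>c \<le> d\<close> neg pos by (auto simp: Z_def)
  ultimately obtain p q where p: "p \<in> Z" "\<And>t. t \<in> Z \<Longrightarrow> p \<le> t"
    and q: "q \<in> Z" "\<And>t. t \<in> Z \<Longrightarrow> t \<le> q"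
    using compact_attains_inf compact_attains_sup by metis
  have "p \<noteq> c" "q \<noteq> d"
    using p(1) q(1) neg pos by (auto simp: Z_def)
  with p q have "c < p" "p \<le> q" "q < d" "w p = 0" "w q = 0"
    by (force simp: Z_def)+
  then show thesis
  proof (rule that)
    show "p \<le> t \<and> t \<le> q" if "t \<in> {c..d}" "w t = 0" for t
      using p(2) q(2) that by (auto simp: Z_def)
  qed
qed

lemma measure_nonzero_ge_outside_zeros:
  fixes w :: "real \<Rightarrow> real"
  assumes cont: "continuous_on {c..d} w" and "c \<le> p" "p \<le> q" "q \<le> d"
    and zeros: "\<And>t. t \<in> {c..d} \<Longrightarrow> w t = 0 \<Longrightarrow> p \<le> t \<and> t \<le> q"
  shows "(p - c) + (d - q) \<le> measure lborel {t \<in> {c..d}. w t \<noteq> 0}"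
proof -
  have "closed {t \<in> {c..d}. w t = 0}"
    by (rule continuous_closed_preimage_constant[OF cont]) auto
  then have "{c..d} - {t \<in> {c..d}. w t = 0} \<in> fmeasurable lborel"
    using \<open>c \<le> p\<close> \<open>p \<le> q\<close> \<open>q \<le> d\<close>
    by (intro fmeasurable_Diff) (auto intro!: fmeasurableI simp: borel_closed)
  moreover have "{t \<in> {c..d}. w t \<noteq> 0} = {c..d} - {t \<in> {c..d}. w t = 0}"
    by auto
  moreover have "{c..d} - {p..q} \<subseteq> {t \<in> {c..d}. w t \<noteq> 0}"
    using zeros by force
  ultimately have "measure lborel ({c..d} - {p..q}) \<le> measure lborel {t \<in> {c..d}. w t \<noteq> 0}"
    by (intro measure_mono_fmeasurable) auto
  moreover have "measure lborel ({c..d} - {p..q}) = (p - c) + (d - q)"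
    using assms by (subst measure_Diff) auto
  ultimately show ?thesis
    by simp
qed

(* Since a^2/L + L - (a^2 + 1) = (1 - a^2)(L - 1) + a^2 (L - 1)^2/L and the two linear terms add
   up to (a^2 - 1)(2 - L1 - L2) >= 0, the budget delta dominates every nonnegative excess. *)
lemma energy_budget_bounds:
  fixes a L1 L2 E1 E2 E3 \<delta> :: real
  assumes "1 \<le> a" and L: "0 < L1" "0 < L2" "L1 + L2 \<le> 2"
    and CS: "a\<^sup>2 \<le> L1 * E1" "a\<^sup>2 \<le> L2 * E3" and "0 \<le> E2"
    and budget: "E1 + E2 + E3 + L1 + L2 \<le> 2 * a\<^sup>2 + 2 + \<delta>"
  shows "(L1 - 1)\<^sup>2 \<le> 2 * \<delta>" "(L2 - 1)\<^sup>2 \<le> 2 * \<delta>" "E2 \<le> \<delta>"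
    and "L1 * E1 - a\<^sup>2 \<le> 2 * \<delta>" "L2 * E3 - a\<^sup>2 \<le> 2 * \<delta>"
proof -
  have "1 \<le> a\<^sup>2"
    using \<open>1 \<le> a\<close> by simp
  have segment: "E - a\<^sup>2 / L \<ge> 0"
    "a\<^sup>2 / L + L - a\<^sup>2 - 1 \<ge> (1 - a\<^sup>2) * (L - 1) + (L - 1)\<^sup>2 / 2"
    if "0 < L" "L \<le> 2" "a\<^sup>2 \<le> L * E" for L E
  proof -
    show "E - a\<^sup>2 / L \<ge> 0"
      using that by (simp add: field_simps)
    have "(L - 1)\<^sup>2 / 2 \<le> (L - 1)\<^sup>2 / L"
      using that by (intro divide_left_mono) auto
    also have "\<dots> \<le> a\<^sup>2 * (L - 1)\<^sup>2 / L"
      using that mult_right_mono[OF \<open>1 \<le> a\<^sup>2\<close>, of "(L - 1)\<^sup>2"] by (intro divide_right_mono) auto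
    moreover have "a\<^sup>2 / L + L - a\<^sup>2 - 1 - (1 - a\<^sup>2) * (L - 1) = a\<^sup>2 * (L - 1)\<^sup>2 / L"
      using that by (simp add: field_simps power2_eq_square)
    ultimately show "a\<^sup>2 / L + L - a\<^sup>2 - 1 \<ge> (1 - a\<^sup>2) * (L - 1) + (L - 1)\<^sup>2 / 2"
      by linarith
  qed
  have "L1 \<le> 2" "L2 \<le> 2"
    using L by linarith+
  note S1 = segment[OF L(1) \<open>L1 \<le> 2\<close> CS(1)] and S3 = segment[OF L(2) \<open>L2 \<le> 2\<close> CS(2)]
  have "(1 - a\<^sup>2) * (L1 - 1) + (1 - a\<^sup>2) * (L2 - 1) = (a\<^sup>2 - 1) * (2 - L1 - L2)"
    by (simp add: algebra_simps)
  also have "\<dots> \<ge> 0"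
    using \<open>1 \<le> a\<^sup>2\<close> L by simp
  finally have "(E1 - a\<^sup>2 / L1) + (E3 - a\<^sup>2 / L2) + E2 + (L1 - 1)\<^sup>2 / 2 + (L2 - 1)\<^sup>2 / 2 \<le> \<delta>"
    using S1(2) S3(2) budget by linarith
  moreover have "0 \<le> (L1 - 1)\<^sup>2" "0 \<le> (L2 - 1)\<^sup>2"
    by simp_all
  ultimately have "(L1 - 1)\<^sup>2 \<le> 2 * \<delta>" "(L2 - 1)\<^sup>2 \<le> 2 * \<delta>" "E2 \<le> \<delta>"
    and X: "E1 - a\<^sup>2 / L1 \<le> \<delta>" "E3 - a\<^sup>2 / L2 \<le> \<delta>"
    using S1(1) S3(1) \<open>0 \<le> E2\<close> by linarith+
  then show "(L1 - 1)\<^sup>2 \<le> 2 * \<delta>" "(L2 - 1)\<^sup>2 \<le> 2 * \<delta>" "E2 \<le> \<delta>"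
    by simp_all
  have "L1 * E1 - a\<^sup>2 = L1 * (E1 - a\<^sup>2 / L1)" "L2 * E3 - a\<^sup>2 = L2 * (E3 - a\<^sup>2 / L2)"
    using L by (simp_all add: field_simps)
  moreover have "L1 * (E1 - a\<^sup>2 / L1) \<le> 2 * \<delta>" "L2 * (E3 - a\<^sup>2 / L2) \<le> 2 * \<delta>"
    using mult_mono[OF \<open>L1 \<le> 2\<close> X(1) _ S1(1)] mult_mono[OF \<open>L2 \<le> 2\<close> X(2) _ S3(1)] by simp_all
  ultimately show "L1 * E1 - a\<^sup>2 \<le> 2 * \<delta>" "L2 * E3 - a\<^sup>2 \<le> 2 * \<delta>"
    by simp_all
qed

lemma has_weak_deriv_increment_square_le:
  assumes w: "has_weak_deriv w g" and "-1 \<le> c" "c \<le> d" "d \<le> 1"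
  shows "(w d - w c)\<^sup>2 \<le> (d - c) * integral {c..d} (\<lambda>s. (g s)\<^sup>2)"
proof -
  have sub: "{c..d} \<subseteq> {-1..1}"
    using assms by auto
  note integrable = has_weak_deriv_integrable[OF w]
  have "w d - w c = integral {c..d} g"
    using has_weak_deriv_increment[OF w, of c d] assms by simp
  then show ?thesis
    using Cauchy_Schwarz_integral_interval[OF integrable_on_subinterval[OF integrable(1) sub]
        integrable_on_subinterval[OF integrable(2) sub] \<open>c \<le> d\<close>]
    by simp
qed

lemma has_weak_deriv_chord_deviation:
  assumes w: "has_weak_deriv w g" and "-1 \<le> c" "c \<le> t" "t \<le> d" "d \<le> 1"
  shows "(w t - w c - (w d - w c) * (t - c) / (d - c))\<^sup>2
           \<le> (d - c) * integral {c..d} (\<lambda>s. (g s)\<^sup>2) - (w d - w c)\<^sup>2"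
proof -
  have sub: "{c..d} \<subseteq> {-1..1}"
    using assms by auto
  note integrable = has_weak_deriv_integrable[OF w]
  have "w t - w c = integral {c..t} g" "w d - w c = integral {c..d} g"
    using has_weak_deriv_increment[OF w, of c t] has_weak_deriv_increment[OF w, of c d] assms
    by simp_all
  then show ?thesis
    using integral_chord_deviation[OF integrable_on_subinterval[OF integrable(1) sub]
        integrable_on_subinterval[OF integrable(2) sub], of t] assms
    by simp
qed

lemma near_linear_from_segments:
  fixes w :: "real \<Rightarrow> real"
  assumes a: "0 \<le> a" "a \<le> 2" and pq: "-1 < p" "p \<le> q" "q < 1" and "\<bar>p\<bar> \<le> s" "\<bar>q\<bar> \<le> s"
    and left: "\<And>t. t \<in> {-1..p} \<Longrightarrow> \<bar>w t + a - a * (t + 1) / (p + 1)\<bar> \<le> s"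
    and mid: "\<And>t. t \<in> {p..q} \<Longrightarrow> \<bar>w t\<bar> \<le> s"
    and right: "\<And>t. t \<in> {q..1} \<Longrightarrow> \<bar>w t - a * (t - q) / (1 - q)\<bar> \<le> s"
    and t: "t \<in> {-1..1}"
  shows "\<bar>w t - a * t\<bar> \<le> 3 * s"
proof -
  have small: "\<bar>a * r * e\<bar> \<le> 2 * s" if "0 \<le> r" "r \<le> 1" "\<bar>e\<bar> \<le> s" for r e
  proof -
    have "\<bar>a * r\<bar> \<le> 2"
      using a that mult_mono[of a 2 r 1] by simp
    then show ?thesis
      using mult_mono[of "\<bar>a * r\<bar>" 2 "\<bar>e\<bar>" s] that by (simp add: abs_mult)
  qed
  have triangle: "\<bar>u - v\<bar> \<le> 3 * s" if "\<bar>u\<bar> \<le> s" "\<bar>v\<bar> \<le> 2 * s" for u v :: real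
    using that by arith
  have "p + 1 \<noteq> 0" "1 - q \<noteq> 0"
    using pq by simp_all
  consider "t \<le> p" | "p \<le> t" "t \<le> q" | "q \<le> t"
    by linarith
  then show ?thesis
  proof cases
    case 1
    have "w t - a * t = (w t + a - a * (t + 1) / (p + 1)) - a * ((t + 1) / (p + 1)) * p"
      using \<open>p + 1 \<noteq> 0\<close> by (simp add: divide_simps) (simp add: algebra_simps)
    also have "\<bar>\<dots>\<bar> \<le> 3 * s"
      using 1 t pq \<open>\<bar>p\<bar> \<le> s\<close> by (intro triangle left small) auto
    finally show ?thesis .
  next
    case 2
    have "\<bar>w t - a * 1 * t\<bar> \<le> 3 * s"
      using 2 \<open>\<bar>p\<bar> \<le> s\<close> \<open>\<bar>q\<bar> \<le> s\<close> by (intro triangle mid small) auto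
    then show ?thesis
      by simp
  next
    case 3
    have "w t - a * t = (w t - a * (t - q) / (1 - q)) - a * ((1 - t) / (1 - q)) * q"
      using \<open>1 - q \<noteq> 0\<close> by (simp add: divide_simps) (simp add: algebra_simps)
    also have "\<bar>\<dots>\<bar> \<le> 3 * s"
      using 3 t pq \<open>\<bar>q\<bar> \<le> s\<close> by (intro triangle right small) auto
    finally show ?thesis .
  qed
qed

lemma has_weak_deriv_energy_excess:
  assumes w: "has_weak_deriv w g" and ends: "w (-1) = -a" "w 1 = a" and "1 \<le> a"
    and H: "(LINT s:{-1..1}|lborel. (g s)\<^sup>2) + measure lborel {y \<in> {-1..1}. w y \<noteq> 0}
              \<le> 2 * a\<^sup>2 + 2 + \<delta>"
  obtains p q where "-1 < p" "p \<le> q" "q < 1" "w p = 0" "w q = 0" "p\<^sup>2 \<le> 2 * \<delta>" "q\<^sup>2 \<le> 2 * \<delta>"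
    and "(p + 1) * integral {-1..p} (\<lambda>s. (g s)\<^sup>2) - a\<^sup>2 \<le> 2 * \<delta>"
    and "(q - p) * integral {p..q} (\<lambda>s. (g s)\<^sup>2) \<le> 2 * \<delta>"
    and "(1 - q) * integral {q..1} (\<lambda>s. (g s)\<^sup>2) - a\<^sup>2 \<le> 2 * \<delta>"
proof -
  note integrable = has_weak_deriv_integrable[OF w]
  have cont: "continuous_on {-1..1} w"
    by (rule has_weak_deriv_continuous_on[OF w])
  have neg: "w (-1) < 0" and pos: "0 < w 1"
    using ends \<open>1 \<le> a\<close> by simp_all
  obtain p q where pq: "-1 < p" "p \<le> q" "q < 1" "w p = 0" "w q = 0"
    and zeros: "\<And>t. t \<in> {-1..1} \<Longrightarrow> w t = 0 \<Longrightarrow> p \<le> t \<and> t \<le> q"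
    by (rule first_and_last_zero[OF cont _ neg pos]) auto
  have "(p - -1) + (1 - q) \<le> measure lborel {y \<in> {-1..1}. w y \<noteq> 0}"
    using pq(1,3) by (intro measure_nonzero_ge_outside_zeros[OF cont _ \<open>p \<le> q\<close> _ zeros]) auto
  then have measure: "(p + 1) + (1 - q) \<le> measure lborel {y \<in> {-1..1}. w y \<noteq> 0}"
    by linarith
  define E1 E2 E3 where "E1 = integral {-1..p} (\<lambda>s. (g s)\<^sup>2)"
    and "E2 = integral {p..q} (\<lambda>s. (g s)\<^sup>2)" and "E3 = integral {q..1} (\<lambda>s. (g s)\<^sup>2)"
  have split: "integral {-1..1} (\<lambda>s. (g s)\<^sup>2) = E1 + E2 + E3"
    unfolding E1_def E2_def E3_def using pq(1-3) by (intro integral_combine3 integrable(2)) auto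
  have CS: "a\<^sup>2 \<le> (p + 1) * E1" "a\<^sup>2 \<le> (1 - q) * E3"
    using has_weak_deriv_increment_square_le[OF w, of "-1" p]
      has_weak_deriv_increment_square_le[OF w, of q 1] pq ends
    by (simp_all add: E1_def E3_def)
  have "0 \<le> E2"
    unfolding E2_def using integrable_on_subinterval[OF integrable(2), of p q] pq(1-3)
    by (intro integral_nonneg) auto
  have budget: "E1 + E2 + E3 + (p + 1) + (1 - q) \<le> 2 * a\<^sup>2 + 2 + \<delta>"
    using H measure split integrable(3) by linarith
  have L: "0 < p + 1" "0 < 1 - q" "(p + 1) + (1 - q) \<le> 2"
    using pq(1-3) by auto
  note bounds = energy_budget_bounds[OF \<open>1 \<le> a\<close> L CS \<open>0 \<le> E2\<close> budget]
  have "(q - p) * E2 \<le> 2 * E2"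
    using pq(1-3) \<open>0 \<le> E2\<close> by (intro mult_right_mono) auto
  show thesis
    using bounds \<open>(q - p) * E2 \<le> 2 * E2\<close>
    by (intro that[OF pq(1-5)]) (simp_all add: E1_def E2_def E3_def)
qed

lemma admissible_near_linear:
  assumes "admissible a w" and "1 \<le> a" "a \<le> 2" and H: "Hfun w \<le> 2 * a\<^sup>2 + 2 + \<delta>"
    and y: "y \<in> {-1..1}"
  shows "\<bar>w y - a * y\<bar> \<le> 3 * sqrt (2 * \<delta>)"
proof -
  have w: "has_weak_deriv w (wderiv w)" and ends: "w (-1) = -a" "w 1 = a"
    using \<open>admissible a w\<close> W12_has_weak_deriv_wderiv unfolding admissible_def by auto
  obtain p q where pq: "-1 < p" "p \<le> q" "q < 1" "w p = 0" "w q = 0" "p\<^sup>2 \<le> 2 * \<delta>" "q\<^sup>2 \<le> 2 * \<delta>"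
    and excess: "(p + 1) * integral {-1..p} (\<lambda>s. (wderiv w s)\<^sup>2) - a\<^sup>2 \<le> 2 * \<delta>"
      "(q - p) * integral {p..q} (\<lambda>s. (wderiv w s)\<^sup>2) \<le> 2 * \<delta>"
      "(1 - q) * integral {q..1} (\<lambda>s. (wderiv w s)\<^sup>2) - a\<^sup>2 \<le> 2 * \<delta>"
    using has_weak_deriv_energy_excess[OF w ends \<open>1 \<le> a\<close>] H unfolding Hfun_def by blast
  have root: "\<bar>x\<bar> \<le> sqrt (2 * \<delta>)" if "x\<^sup>2 \<le> 2 * \<delta>" for x
    using real_sqrt_le_mono[OF that] by simp
  show ?thesis
  proof (rule near_linear_from_segments[OF _ \<open>a \<le> 2\<close> pq(1-3) root[OF pq(6)] root[OF pq(7)] _ _ _ y])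
    show "0 \<le> a"
      using \<open>1 \<le> a\<close> by simp
    show "\<bar>w t + a - a * (t + 1) / (p + 1)\<bar> \<le> sqrt (2 * \<delta>)" if "t \<in> {-1..p}" for t
      using has_weak_deriv_chord_deviation[OF w, of "-1" t p] that pq excess(1) ends
      by (intro root) simp
    show "\<bar>w t\<bar> \<le> sqrt (2 * \<delta>)" if "t \<in> {p..q}" for t
      using has_weak_deriv_chord_deviation[OF w, of p t q] that pq excess(2)
      by (intro root) simp
    show "\<bar>w t - a * (t - q) / (1 - q)\<bar> \<le> sqrt (2 * \<delta>)" if "t \<in> {q..1}" for t
      using has_weak_deriv_chord_deviation[OF w, of q t 1] that pq excess(3) ends
      by (intro root) simp
  qed
qed

lemma fN_le_2:
  assumes "0 \<le> \<alpha>" "0 < N"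
  shows "fN \<alpha> N x \<le> 2"
proof -
  have "\<bar>x\<bar> * (1 + \<alpha>) / N \<le> 2 * (1 + \<alpha>)" if "\<bar>x\<bar> \<le> 2 * N"
  proof -
    have "\<bar>x\<bar> * (1 + \<alpha>) \<le> 2 * (1 + \<alpha>) * N"
      using mult_right_mono[OF that, of "1 + \<alpha>"] assms by (simp add: mult_ac)
    then show ?thesis
      using assms by (simp add: pos_divide_le_eq)
  qed
  then show ?thesis
    using assms unfolding fN_def by auto
qed

theorem lemma3p6:
  fixes \<alpha> N :: real
  assumes "0 < \<alpha>" "\<alpha> < 1" "0 < N"
  shows "\<exists>C>0. \<forall>x \<epsilon> w v.
           x \<in> {-3*N<..<3*N} \<and> fN \<alpha> N x \<ge> 1 \<and> 0 < \<epsilon> \<and> \<epsilon> < 1 \<and>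
           admissible (fN \<alpha> N x) w \<and> is_minimizer (fN \<alpha> N x) v \<and>
           Hfun w \<le> Hfun v + \<epsilon>
           \<longrightarrow> (\<forall>y\<in>{-1..1}. \<bar>w y - v y\<bar> \<le> C * sqrt \<epsilon>)"
proof (intro exI[of _ "3 * sqrt 2"] conjI allI impI ballI)
  fix x \<epsilon> w v and y :: real
  assume hyps: "x \<in> {-3*N<..<3*N} \<and> fN \<alpha> N x \<ge> 1 \<and> 0 < \<epsilon> \<and> \<epsilon> < 1 \<and>
           admissible (fN \<alpha> N x) w \<and> is_minimizer (fN \<alpha> N x) v \<and> Hfun w \<le> Hfun v + \<epsilon>"
    and y: "y \<in> {-1..1}"
  define a where "a = fN \<alpha> N x"
  have "1 \<le> a" "a \<le> 2"
    using hyps fN_le_2[of \<alpha> N x] assms by (auto simp: a_def)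
  have "admissible a (\<lambda>y. a * y)"
    unfolding admissible_def W12_def using has_weak_deriv_linear by auto
  then have Hv: "Hfun v \<le> 2 * a\<^sup>2 + 2"
    using hyps Hfun_linear[of a] \<open>1 \<le> a\<close> by (auto simp: a_def is_minimizer_def)
  have "\<bar>v y - a * y\<bar> \<le> 3 * sqrt (2 * 0)"
    using hyps Hv
    by (intro admissible_near_linear y \<open>1 \<le> a\<close> \<open>a \<le> 2\<close>) (auto simp: a_def is_minimizer_def)
  moreover have "\<bar>w y - a * y\<bar> \<le> 3 * sqrt (2 * \<epsilon>)"
    using hyps Hv by (intro admissible_near_linear y \<open>1 \<le> a\<close> \<open>a \<le> 2\<close>) (auto simp: a_def)
  ultimately show "\<bar>w y - v y\<bar> \<le> 3 * sqrt 2 * sqrt \<epsilon>"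
    by (simp add: real_sqrt_mult)
qed simp

end
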